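(* For every positive integer $n\notin\{1,2,3,6\}$, $A'(n,6,4)=A(n,6,4)$. Moreover, $A'(n,6,4)=1$ for $n\in\{1,2,3\}$ and $A'(6,6,4)=2$.
   Context: For ${\sf u},{\sf v}\in\mathbb{F}_2^n$, $\Delta({\sf u},{\sf v})$ is the Hamming distance and ${\rm wt}({\sf u})$ the Hamming weight. $A'(n,d,e)$ denotes the maximum size of a nonempty set $S\subseteq \mathbb{F}_2^n$ such that ${\rm wt}({\sf u})\le e$ for all ${\sf u}\in S$ and $\Delta({\sf u},{\sf v})\ge d$ for all distinct ${\sf u},{\sf v}\in S$. $A(n,d,e)$ denotes the maximum size of a set $S\subseteq\mathbb{F}_2^n$ all of whose elements have weight exactly $e$ and with pairwise distances at least $d$ (the maximum size of a constant-weight code). It is known that, writing $L(n)=\left\lfloor \frac{n}{4} \left\lfloor \frac{n-1}{3}\right\rfloor \right\rfloor$: $A(n,6,4)=L(n)-1$ if $n\equiv 7,10 \pmod{12}$ and $n\notin\{10,19\}$; $A(n,6,4)=L(n)-1$ if $n\in\{9,17\}$; $A(n,6,4)=L(n)-2$ if $n\in\{8,10,11\}$; $A(19,6,4)=L(19)-3$; and $A(n,6,4)=L(n)$ otherwise. *)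

theory Defs
  imports Main
begin

text \<open>Vectors of F_2^n are represented as boolean lists of length n.\<close>

definition vecs :: "nat \<Rightarrow> bool list set" where
  "vecs n = {u. length u = n}"

definition wt :: "bool list \<Rightarrow> nat" where
  "wt u = card {i. i < length u \<and> u ! i}"

definition hdist :: "bool list \<Rightarrow> bool list \<Rightarrow> nat" where
  "hdist u v = card {i. i < length u \<and> u ! i \<noteq> v ! i}"

definition min_dist_ok :: "nat \<Rightarrow> bool list set \<Rightarrow> bool" where
  "min_dist_ok d S \<longleftrightarrow> (\<forall>u\<in>S. \<forall>v\<in>S. u \<noteq> v \<longrightarrow> d \<le> hdist u v)"

definition A' :: "nat \<Rightarrow> nat \<Rightarrow> nat \<Rightarrow> nat" where
  "A' n d e = Max {card S | S. S \<subseteq> vecs n \<and> S \<noteq> {} \<and> (\<forall>u\<in>S. wt u \<le> e) \<and> min_dist_ok d S}"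

definition A :: "nat \<Rightarrow> nat \<Rightarrow> nat \<Rightarrow> nat" where
  "A n d e = Max {card S | S. S \<subseteq> vecs n \<and> (\<forall>u\<in>S. wt u = e) \<and> min_dist_ok d S}"

end

theory Submission
  imports Defs
begin

text \<open>
  Taking supports turns a code with weights at most 4 and minimum distance 6 into a family F of
  subsets of {0..<n} of size at most 4 whose pairwise symmetric differences have at least 6
  elements, and a packing of 4-sets (any two blocks share at most one point) is exactly such a
  family of 4-sets. So it suffices to turn F into a packing with at least as many blocks.
  If F has two or more members, its 3-sets are pairwise disjoint and disjoint from its 4-sets,
  and a 2-set {p, q} is disjoint from all other members, which are then 4-sets.
  Each 3-set is completed by a point outside it, chosen so that no two 3-sets take a point from
  each other; this is possible unless the 3-sets partition the n points into one or two parts.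
  A 2-set {p, q} is replaced by a block {p, q, x, y} on a pair x, y not yet covered; if there is
  no such pair, the 4-sets cover every pair of the other n - 2 points, and as n - 2 \<noteq> 4 they
  contain a triangle, whose rearrangement makes room for one more block.
  Finally, two distinct words of length n < 6 have distance less than 6, and three words at
  mutual distance 6 need length at least 9, which settles n \<le> 3 and n = 6. The inequality
  A(n,6,4) \<le> A'(n,6,4) is trivial.
\<close>

section \<open>Supports of binary words\<close>

lemma card_sym_diff:
  assumes "finite X" "finite Y"
  shows "card (sym_diff X Y) + 2 * card (X \<inter> Y) = card X + card Y"
proof -
  have "card (sym_diff X Y) = card (X - Y) + card (Y - X)"
    using assms by (intro card_Un_disjoint) auto
  moreover have "card (X - Y) = card X - card (X \<inter> Y)" "card (Y - X) = card Y - card (X \<inter> Y)"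
    using assms by (simp_all add: card_Diff_subset_Int Int_commute)
  moreover have "card (X \<inter> Y) \<le> card X" "card (X \<inter> Y) \<le> card Y"
    using assms by (simp_all add: card_mono)
  ultimately show ?thesis by linarith
qed

definition supp :: "bool list \<Rightarrow> nat set" where
  "supp u = {i. i < length u \<and> u ! i}"

definition char_vec :: "nat \<Rightarrow> nat set \<Rightarrow> bool list" where
  "char_vec n X = map (\<lambda>i. i \<in> X) [0..<n]"

lemma finite_supp [simp]: "finite (supp u)"
  by (simp add: supp_def)

lemma supp_subset: "supp u \<subseteq> {..<length u}"
  by (auto simp: supp_def)

lemma wt_eq_card_supp: "wt u = card (supp u)"
  by (simp add: wt_def supp_def)

lemma hdist_eq_card_sym_diff:
  "length u = length v \<Longrightarrow> hdist u v = card (sym_diff (supp u) (supp v))"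
  unfolding hdist_def supp_def by (rule arg_cong[where f = card]) auto

lemma hdist_le_length: "hdist u v \<le> length u"
  unfolding hdist_def by (rule order_trans[OF card_mono[of "{..<length u}"]]) auto

lemma length_char_vec [simp]: "length (char_vec n X) = n"
  by (simp add: char_vec_def)

lemma supp_char_vec [simp]: "supp (char_vec n X) = X \<inter> {..<n}"
  by (auto simp: supp_def char_vec_def)

lemma char_vec_supp: "length u = n \<Longrightarrow> char_vec n (supp u) = u"
  by (auto simp: supp_def char_vec_def intro!: nth_equalityI)

section \<open>Packings of 4-sets\<close>

definition separated :: "nat \<Rightarrow> nat set set \<Rightarrow> bool" where
  "separated d F \<longleftrightarrow> (\<forall>X\<in>F. \<forall>Y\<in>F. X \<noteq> Y \<longrightarrow> d \<le> card (sym_diff X Y))"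

lemma separated_card_Int:
  assumes "separated d F" "X \<in> F" "Y \<in> F" "X \<noteq> Y" "finite X" "finite Y"
  shows "d + 2 * card (X \<inter> Y) \<le> card X + card Y"
proof -
  have "d \<le> card (sym_diff X Y)"
    using assms(1-4) by (simp add: separated_def)
  then show ?thesis
    using card_sym_diff[OF assms(5,6)] by linarith
qed

lemma separated_disjnt:
  assumes "separated 6 F" "X \<in> F" "Y \<in> F" "X \<noteq> Y" "finite X" "finite Y" "card X + card Y < 8"
  shows "disjnt X Y"
proof -
  have "6 + 2 * card (X \<inter> Y) \<le> card X + card Y"
    by (rule separated_card_Int[OF assms(1-6)])
  then have "card (X \<inter> Y) = 0"
    using assms(7) by linarith
  then show ?thesis
    using assms(5) by (simp add: disjnt_def)
qed

definition packing :: "nat \<Rightarrow> nat set set \<Rightarrow> bool" where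
  "packing n F \<longleftrightarrow>
     (\<forall>X\<in>F. X \<subseteq> {..<n} \<and> card X = 4) \<and> pairwise (\<lambda>X Y. card (X \<inter> Y) \<le> 1) F"

lemma packing_block: "packing n F \<Longrightarrow> X \<in> F \<Longrightarrow> X \<subseteq> {..<n} \<and> card X = 4"
  by (simp add: packing_def)

lemma finite_packing_block: "packing n F \<Longrightarrow> X \<in> F \<Longrightarrow> finite X"
  by (meson finite_lessThan finite_subset packing_block)

lemma finite_packing: "packing n F \<Longrightarrow> finite F"
  by (rule finite_subset[of F "Pow {..<n}"]) (auto dest: packing_block)

lemma packing_meet: "packing n F \<Longrightarrow> X \<in> F \<Longrightarrow> Y \<in> F \<Longrightarrow> X \<noteq> Y \<Longrightarrow> card (X \<inter> Y) \<le> 1"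
  by (simp add: packing_def pairwise_def)

lemma packing_block_eqI:
  assumes "packing n F" "X \<in> F" "Y \<in> F" "a \<noteq> b" "a \<in> X" "b \<in> X" "a \<in> Y" "b \<in> Y"
  shows "X = Y"
proof (rule ccontr)
  assume "X \<noteq> Y"
  then have "card (X \<inter> Y) \<le> 1"
    by (rule packing_meet[OF assms(1-3)])
  moreover have "{a, b} \<subseteq> X \<inter> Y" "finite (X \<inter> Y)"
    using assms finite_packing_block by auto
  ultimately show False
    using card_mono[of "X \<inter> Y" "{a, b}"] \<open>a \<noteq> b\<close> by simp
qed

lemma packing_separated: "packing n F \<Longrightarrow> separated 6 F"
  unfolding separated_def
proof (intro ballI impI)
  fix X Y assume "packing n F" "X \<in> F" "Y \<in> F" "X \<noteq> Y"
  then have "card X = 4" "card Y = 4" "card (X \<inter> Y) \<le> 1" "finite X" "finite Y"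
    by (auto dest: packing_block packing_meet finite_packing_block)
  then show "6 \<le> card (sym_diff X Y)"
    using card_sym_diff[of X Y] by linarith
qed

lemma card_le_1I: "finite S \<Longrightarrow> (\<And>a b. a \<in> S \<Longrightarrow> b \<in> S \<Longrightarrow> a = b) \<Longrightarrow> card S \<le> 1"
  by (simp add: card_le_Suc0_iff_eq)

lemma card_le_1_if_subset_singleton: "S \<subseteq> {a} \<Longrightarrow> card S \<le> 1"
  by (auto dest!: subset_singletonD)

section \<open>Enlarging packings\<close>

lemma packing_insert:
  assumes "packing n W" "N \<subseteq> {..<n}" "card N = 4" "\<And>w. w \<in> W \<Longrightarrow> card (N \<inter> w) \<le> 1"
  shows "packing n (insert N W) \<and> card (insert N W) = Suc (card W)"
proof -
  have "N \<notin> W"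
    using assms(3,4) by force
  then show ?thesis
    using assms finite_packing[OF assms(1)]
    by (auto simp: packing_def pairwise_insert Int_commute)
qed

lemma packing_exchange:
  assumes W: "packing n W" and "Old \<subseteq> W" and New: "packing n New" "New \<inter> W = {}"
    and meet: "\<And>X D. X \<in> New \<Longrightarrow> D \<in> W - Old \<Longrightarrow> card (X \<inter> D) \<le> 1"
  shows "packing n (W - Old \<union> New) \<and> card (W - Old \<union> New) = card W - card Old + card New"
proof
  have "card (X \<inter> Y) \<le> 1" if XY: "X \<in> W - Old \<union> New" "Y \<in> W - Old \<union> New" "X \<noteq> Y" for X Y
  proof -
    consider "X \<in> W" "Y \<in> W" | "X \<in> New" "Y \<in> New" | "X \<in> New" "Y \<in> W - Old" | "X \<in> W - Old" "Y \<in> New"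
      using XY(1,2) by blast
    then show ?thesis
    proof cases
      case 4
      then show ?thesis
        using meet[of Y X] by (simp add: Int_commute)
    qed (use XY(3) packing_meet[OF W] packing_meet[OF New(1)] meet in auto)
  qed
  then show "packing n (W - Old \<union> New)"
    using W New(1) by (auto simp: packing_def pairwise_def)
  have "card (W - Old \<union> New) = card (W - Old) + card New"
    using New(2) finite_packing[OF W] finite_packing[OF New(1)] by (intro card_Un_disjoint) auto
  then show "card (W - Old \<union> New) = card W - card Old + card New"
    using \<open>Old \<subseteq> W\<close> finite_packing[OF W] by (simp add: card_Diff_subset finite_subset)
qed

text \<open>Trading r1 in B1, r2 in C2 and r3 in C3 for p frees the three
  pairs of the triangle, so that {q, r1, r2, r3} can be added as a fourth block.\<close>
locale packing_triangle =
  fixes n :: nat and W :: "nat set set" and p q r1 r2 r3 :: nat and B1 C2 C3 :: "nat set"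
  assumes packing: "packing n W"
    and pq: "p < n" "q < n" "p \<noteq> q" "\<forall>w\<in>W. p \<notin> w \<and> q \<notin> w"
    and r12: "r1 \<noteq> r2"
    and B1: "B1 \<in> W" "r1 \<in> B1" "r2 \<in> B1" "r3 \<notin> B1"
    and C2: "C2 \<in> W" "r2 \<in> C2" "r3 \<in> C2"
    and C3: "C3 \<in> W" "r1 \<in> C3" "r3 \<in> C3"
begin

lemma meets: "x \<in> B1 \<and> x \<in> C2 \<longleftrightarrow> x = r2" "x \<in> B1 \<and> x \<in> C3 \<longleftrightarrow> x = r1"
  "x \<in> C2 \<and> x \<in> C3 \<longleftrightarrow> x = r3"
proof -
  have B1C2: "x = r2" if "x \<in> B1" "x \<in> C2" for x
  proof (rule ccontr)
    assume "x \<noteq> r2"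
    then have "B1 = C2"
      by (rule packing_block_eqI[OF packing B1(1) C2(1) _ that(1) B1(3) that(2) C2(2)])
    with B1(4) C2(3) show False by simp
  qed
  have B1C3: "x = r1" if "x \<in> B1" "x \<in> C3" for x
  proof (rule ccontr)
    assume "x \<noteq> r1"
    then have "B1 = C3"
      by (rule packing_block_eqI[OF packing B1(1) C3(1) _ that(1) B1(2) that(2) C3(2)])
    with B1(4) C3(3) show False by simp
  qed
  have C2C3: "x = r3" if "x \<in> C2" "x \<in> C3" for x
  proof (rule ccontr)
    assume "x \<noteq> r3"
    then have "C2 = C3"
      by (rule packing_block_eqI[OF packing C2(1) C3(1) _ that(1) C2(3) that(2) C3(3)])
    then have "C2 = B1"
      using packing_block_eqI[OF packing C2(1) B1(1) r12 _ C2(2)] B1(2,3) C3(2) by simp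
    with B1(4) C2(3) show False by simp
  qed
  show "x \<in> B1 \<and> x \<in> C2 \<longleftrightarrow> x = r2" "x \<in> B1 \<and> x \<in> C3 \<longleftrightarrow> x = r1"
    "x \<in> C2 \<and> x \<in> C3 \<longleftrightarrow> x = r3"
    using B1C2 B1C3 C2C3 B1(2,3) C2(2,3) C3(2,3) by blast+
qed

lemma pq_notin_blocks: "p \<notin> B1" "q \<notin> B1" "p \<notin> C2" "q \<notin> C2" "p \<notin> C3" "q \<notin> C3"
  using pq(4) B1(1) C2(1) C3(1) by auto

lemma off_triangle: "r1 \<notin> C2" "r2 \<notin> C3" "r3 \<noteq> r1" "r3 \<noteq> r2"
  using meets(1)[of r1] meets(2)[of r2] B1(2-4) r12 by auto

lemma old_blocks: "{B1, C2, C3} \<subseteq> W" "card {B1, C2, C3} = 3"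
proof -
  have "B1 \<noteq> C2" "B1 \<noteq> C3" "C2 \<noteq> C3"
    using B1(2,4) C2(2) C3(3) off_triangle(1,2) by metis+
  then show "{B1, C2, C3} \<subseteq> W" "card {B1, C2, C3} = 3"
    using B1(1) C2(1) C3(1) by auto
qed

definition new_blocks :: "nat set set" where
  "new_blocks = {insert p (B1 - {r1}), insert p (C2 - {r2}), insert p (C3 - {r3}), {q, r1, r2, r3}}"

lemma new_blocks: "packing n new_blocks" "card new_blocks = 4"
proof -
  define B1' where "B1' = insert p (B1 - {r1})"
  define C2' where "C2' = insert p (C2 - {r2})"
  define C3' where "C3' = insert p (C3 - {r3})"
  define N where "N = {q, r1, r2, r3}"
  have new: "new_blocks = {B1', C2', C3', N}"
    by (simp add: new_blocks_def B1'_def C2'_def C3'_def N_def)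
  have q_new: "q \<noteq> r1" "q \<noteq> r2" "q \<noteq> r3"
    using pq_notin_blocks B1(2,3) C2(3) by auto
  have p_new: "p \<notin> N"
    using pq_notin_blocks pq(3) B1(2,3) C2(3) by (auto simp: N_def)
  have card: "card B1' = 4" "card C2' = 4" "card C3' = 4" "card N = 4"
    using packing_block[OF packing] finite_packing_block[OF packing] B1 C2 C3 pq_notin_blocks q_new
      off_triangle r12
    by (auto simp: B1'_def C2'_def C3'_def N_def)
  have "B1' \<inter> C2' \<subseteq> {p}" "B1' \<inter> C3' \<subseteq> {p}" "C2' \<inter> C3' \<subseteq> {p}"
    unfolding B1'_def C2'_def C3'_def using meets by blast+
  moreover have "N \<inter> B1' \<subseteq> {r2}" "N \<inter> C2' \<subseteq> {r3}" "N \<inter> C3' \<subseteq> {r1}"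
    using p_new pq_notin_blocks off_triangle B1(4) by (auto simp: B1'_def C2'_def C3'_def N_def)
  ultimately have meet: "card (B1' \<inter> C2') \<le> 1" "card (B1' \<inter> C3') \<le> 1" "card (C2' \<inter> C3') \<le> 1"
    "card (N \<inter> B1') \<le> 1" "card (N \<inter> C2') \<le> 1" "card (N \<inter> C3') \<le> 1"
    by (metis card_le_1_if_subset_singleton)+
  have "B1' \<subseteq> {..<n}" "C2' \<subseteq> {..<n}" "C3' \<subseteq> {..<n}" "N \<subseteq> {..<n}"
    using packing_block[OF packing] B1 C2 C3 pq(1,2) by (auto simp: B1'_def C2'_def C3'_def N_def)
  then show "packing n new_blocks"
    using card meet unfolding packing_def new pairwise_def by (simp add: Int_commute)
  have "B1' \<noteq> C2'" "B1' \<noteq> C3'" "C2' \<noteq> C3'" "N \<noteq> B1'" "N \<noteq> C2'" "N \<noteq> C3'"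
    using meet card by auto
  then show "card new_blocks = 4"
    by (simp add: new)
qed

lemma new_blocks_meet_old:
  assumes "X \<in> new_blocks" "D \<in> W - {B1, C2, C3}"
  shows "card (X \<inter> D) \<le> 1"
proof -
  have D: "D \<in> W" "D \<notin> {B1, C2, C3}" "p \<notin> D" "q \<notin> D"
    using assms(2) pq(4) by auto
  have shrunk: "card (insert p (Y - {r}) \<inter> D) \<le> 1" if "Y \<in> {B1, C2, C3}" for Y r
  proof -
    have "Y \<in> W" "Y \<noteq> D"
      using that D(2) old_blocks(1) by auto
    then have "card (Y \<inter> D) \<le> 1" "finite (Y \<inter> D)"
      using packing_meet[OF packing _ D(1)] finite_packing_block[OF packing] by auto
    moreover have "insert p (Y - {r}) \<inter> D \<subseteq> Y \<inter> D"
      using D(3) by blast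
    ultimately show ?thesis
      using card_mono[of "Y \<inter> D" "insert p (Y - {r}) \<inter> D"] by linarith
  qed
  have "\<not> (r1 \<in> D \<and> r2 \<in> D)" "\<not> (r2 \<in> D \<and> r3 \<in> D)" "\<not> (r1 \<in> D \<and> r3 \<in> D)"
    using packing_block_eqI[OF packing D(1) B1(1) r12] B1(2,3)
      packing_block_eqI[OF packing D(1) C2(1) off_triangle(4)[symmetric]] C2(2,3)
      packing_block_eqI[OF packing D(1) C3(1) off_triangle(3)[symmetric]] C3(2,3) D(2) by blast+
  then have "card ({q, r1, r2, r3} \<inter> D) \<le> 1"
    by (intro card_le_1I) (use D(4) in auto)
  moreover have "card (insert p (B1 - {r1}) \<inter> D) \<le> 1" "card (insert p (C2 - {r2}) \<inter> D) \<le> 1"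
    "card (insert p (C3 - {r3}) \<inter> D) \<le> 1"
    by (rule shrunk; simp)+
  ultimately show ?thesis
    using assms(1) unfolding new_blocks_def by blast
qed

lemma exchange: "\<exists>G. packing n G \<and> card G = Suc (card W)"
proof -
  have "new_blocks \<inter> W = {}"
    using pq(4) by (auto simp: new_blocks_def)
  then have G: "packing n (W - {B1, C2, C3} \<union> new_blocks)"
    "card (W - {B1, C2, C3} \<union> new_blocks) = card W - 3 + 4"
    using packing_exchange[OF packing old_blocks(1) new_blocks(1) _ new_blocks_meet_old]
      old_blocks(2) new_blocks(2) by simp_all
  have "3 \<le> card W"
    using card_mono[OF finite_packing[OF packing] old_blocks(1)] old_blocks(2) by simp
  with G show ?thesis
    by (intro exI[of _ "W - {B1, C2, C3} \<union> new_blocks"]) simp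
qed

end

lemma packing_extend_avoiding_pair:
  assumes W: "packing n W" and pq: "p < n" "q < n" "p \<noteq> q" "\<forall>w\<in>W. p \<notin> w \<and> q \<notin> w"
    and n: "4 \<le> n" "n \<noteq> 6"
  shows "\<exists>G. packing n G \<and> card G = Suc (card W)"
proof -
  define V where "V = {..<n} - {p, q}"
  have V: "finite V" "card V = n - 2"
    using pq by (simp_all add: V_def card_Diff_subset)
  show ?thesis
  proof (cases "\<exists>x\<in>V. \<exists>y\<in>V. x \<noteq> y \<and> (\<forall>w\<in>W. \<not> (x \<in> w \<and> y \<in> w))")
    case True
    then obtain x y where xy: "x \<in> V" "y \<in> V" "x \<noteq> y" "\<forall>w\<in>W. \<not> (x \<in> w \<and> y \<in> w)"
      by blast
    have "card ({p, q, x, y} \<inter> w) \<le> 1" if "w \<in> W" for w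
      by (rule card_le_1I) (use that xy(4) pq(4) in auto)
    moreover have "{p, q, x, y} \<subseteq> {..<n}" "card {p, q, x, y} = 4"
      using xy(1-3) pq(1-3) by (auto simp: V_def)
    ultimately show ?thesis
      using packing_insert[OF W] by blast
  next
    case False
    then have cover: "\<exists>w\<in>W. x \<in> w \<and> y \<in> w" if "x \<in> V" "y \<in> V" "x \<noteq> y" for x y
      using that by blast
    have "\<not> card V \<le> 1"
      using V(2) n(1) by simp
    then obtain r1 r2 where r: "r1 \<in> V" "r2 \<in> V" "r1 \<noteq> r2"
      using card_le_Suc0_iff_eq[OF V(1)] by auto
    then obtain B1 where B1: "B1 \<in> W" "r1 \<in> B1" "r2 \<in> B1"
      using cover by blast
    have "B1 \<subseteq> V" "card B1 = 4"
      using packing_block[OF W B1(1)] pq(4) B1(1) by (auto simp: V_def)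
    moreover have "B1 \<noteq> V"
      using calculation(2) V(2) n by auto
    ultimately obtain r3 where r3: "r3 \<in> V" "r3 \<notin> B1"
      by blast
    then obtain C2 C3 where "C2 \<in> W" "r2 \<in> C2" "r3 \<in> C2" "C3 \<in> W" "r1 \<in> C3" "r3 \<in> C3"
      using cover r B1 by metis
    then have "packing_triangle n W p q r1 r2 r3 B1 C2 C3"
      using W pq r(3) B1 r3(2) by unfold_locales auto
    then show ?thesis
      by (rule packing_triangle.exchange)
  qed
qed

lemma exists_choice_without_swaps:
  assumes "pairwise disjnt F" "\<forall>T\<in>F. T \<noteq> {}" "3 \<le> card F"
  shows "\<exists>e. (\<forall>T\<in>F. e T \<in> \<Union>F - T) \<and> (\<forall>T\<in>F. \<forall>T'\<in>F. T \<noteq> T' \<longrightarrow> \<not> (e T \<in> T' \<and> e T' \<in> T))"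
proof -
  obtain A B C where ABC: "A \<in> F" "B \<in> F" "C \<in> F" "A \<noteq> B" "B \<noteq> C" "A \<noteq> C"
    using assms(3) by (auto simp: numeral_3_eq_3 card_le_Suc_iff)
  then obtain a b c where abc: "a \<in> A" "b \<in> B" "c \<in> C"
    using assms(2) by blast
  have same: "X = Y" if "X \<in> F" "Y \<in> F" "x \<in> X" "x \<in> Y" for X Y x
    using assms(1) that by (auto simp: pairwise_def disjnt_def)
  define e where "e T = (if T = A then b else if T = B then c else a)" for T
  have e: "e A = b" "e B = c" "T \<noteq> A \<Longrightarrow> T \<noteq> B \<Longrightarrow> e T = a" for T
    using ABC(4) by (simp_all add: e_def)
  have "e T \<in> \<Union>F - T" if "T \<in> F" for T
  proof (cases "T = A \<or> T = B")
    case True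
    then show ?thesis
      using e ABC abc same[OF _ that] by blast
  next
    case False
    then show ?thesis
      using e(3) ABC(1) abc(1) same[OF _ that] by blast
  qed
  moreover have "\<not> (e T \<in> T' \<and> e T' \<in> T)" if T: "T \<in> F" "T' \<in> F" "T \<noteq> T'" for T T'
  proof
    assume swap: "e T \<in> T' \<and> e T' \<in> T"
    consider "T = A" | "T = B" | "T \<noteq> A" "T \<noteq> B"
      by blast
    then show False
    proof cases
      case 1
      then have "T' = B"
        using same[OF ABC(2) T(2) abc(2)] swap e(1) by simp
      then show False
        using same[OF ABC(3) T(1) abc(3)] swap e(2) 1 ABC(6) by simp
    next
      case 2
      then have "T' = C"
        using same[OF ABC(3) T(2) abc(3)] swap e(2) by simp
      then show False
        using same[OF ABC(1) T(1) abc(1)] swap e(3)[of C] 2 ABC(4-6) by simp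
    next
      case 3
      then have "T' = A"
        using same[OF ABC(1) T(2) abc(1)] swap e(3) by simp
      then show False
        using same[OF ABC(2) T(1) abc(2)] swap e(1) 3 by simp
    qed
  qed
  ultimately show ?thesis
    by blast
qed

lemma triples_exists_choice_without_swaps:
  fixes F3 :: "nat set set"
  assumes F3: "\<forall>T\<in>F3. T \<subseteq> {..<n} \<and> card T = 3" "pairwise disjnt F3" and n: "4 \<le> n" "n \<noteq> 6"
  shows "\<exists>e. (\<forall>T\<in>F3. e T < n \<and> e T \<notin> T) \<and> (\<forall>T\<in>F3. \<forall>T'\<in>F3. T \<noteq> T' \<longrightarrow> \<not> (e T \<in> T' \<and> e T' \<in> T))"
proof (cases "\<Union>F3 = {..<n}")
  case True
  have "finite T" if "T \<in> F3" for T
  proof -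
    have "T \<subseteq> {..<n}"
      using F3(1) that by blast
    then show ?thesis
      using finite_subset by blast
  qed
  then have "card (\<Union>F3) = sum card F3"
    using F3(2) by (intro card_Union_disjoint)
  also have "\<dots> = 3 * card F3"
    using F3(1) by simp
  finally have "n = 3 * card F3"
    using True by simp
  with n have "3 \<le> card F3"
    by presburger
  moreover have "\<forall>T\<in>F3. T \<noteq> {}"
    using F3(1) by auto
  ultimately obtain e where "\<forall>T\<in>F3. e T \<in> \<Union>F3 - T"
    "\<forall>T\<in>F3. \<forall>T'\<in>F3. T \<noteq> T' \<longrightarrow> \<not> (e T \<in> T' \<and> e T' \<in> T)"
    using exists_choice_without_swaps[OF F3(2)] by blast
  then show ?thesis
    using True by auto
next
  case False
  moreover have "\<Union>F3 \<subseteq> {..<n}"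
    using F3(1) by auto
  ultimately obtain x where "x < n" "x \<notin> \<Union>F3"
    by auto
  then show ?thesis
    by (intro exI[of _ "\<lambda>_. x"]) auto
qed

lemma packing_extended_triples:
  assumes F3: "\<forall>T\<in>F3. T \<subseteq> {..<n} \<and> card T = 3" "pairwise disjnt F3"
    and e: "\<forall>T\<in>F3. e T < n \<and> e T \<notin> T" "\<forall>T\<in>F3. \<forall>T'\<in>F3. T \<noteq> T' \<longrightarrow> \<not> (e T \<in> T' \<and> e T' \<in> T)"
  shows "packing n ((\<lambda>T. insert (e T) T) ` F3)" "card ((\<lambda>T. insert (e T) T) ` F3) = card F3"
proof -
  let ?ext = "\<lambda>T. insert (e T) T"
  have block_ext: "?ext T \<subseteq> {..<n}" "card (?ext T) = 4" "finite (?ext T)" if "T \<in> F3" for T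
  proof -
    have "card T = 3" "e T \<notin> T" "T \<subseteq> {..<n}" "e T < n"
      using F3(1) e(1) that by auto
    moreover have "finite T"
      using calculation(1) card.infinite by fastforce
    ultimately show "?ext T \<subseteq> {..<n}" "card (?ext T) = 4" "finite (?ext T)"
      by auto
  qed
  have meet_ext: "card (?ext T \<inter> ?ext T') \<le> 1" if "T \<in> F3" "T' \<in> F3" "T \<noteq> T'" for T T'
  proof -
    have "T \<inter> T' = {}"
      using F3(2) that by (simp add: pairwise_def disjnt_def)
    moreover have "\<not> (e T \<in> T' \<and> e T' \<in> T)"
      using e(2) that by blast
    ultimately show ?thesis
      using block_ext(3)[OF that(1)] by (intro card_le_1I) auto
  qed
  have "\<forall>X\<in>?ext ` F3. X \<subseteq> {..<n} \<and> card X = 4"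
    using block_ext by blast
  moreover have "pairwise (\<lambda>X Y. card (X \<inter> Y) \<le> 1) (?ext ` F3)"
    by (rule pairwise_imageI) (use meet_ext in blast)
  ultimately show "packing n (?ext ` F3)"
    by (simp add: packing_def)
  have "inj_on ?ext F3"
  proof (rule inj_onI, rule ccontr)
    fix T T' assume T: "T \<in> F3" "T' \<in> F3" "?ext T = ?ext T'" "T \<noteq> T'"
    then have "card (?ext T \<inter> ?ext T') = 4"
      using block_ext(2) by simp
    with meet_ext[OF T(1,2,4)] show False
      by simp
  qed
  then show "card (?ext ` F3) = card F3"
    by (rule card_image)
qed

lemma packing_extend_triples:
  assumes F4: "packing n F4" and F3: "\<forall>T\<in>F3. T \<subseteq> {..<n} \<and> card T = 3" "pairwise disjnt F3"
    "\<forall>T\<in>F3. \<forall>w\<in>F4. disjnt T w"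
    and e: "\<forall>T\<in>F3. e T < n \<and> e T \<notin> T" "\<forall>T\<in>F3. \<forall>T'\<in>F3. T \<noteq> T' \<longrightarrow> \<not> (e T \<in> T' \<and> e T' \<in> T)"
  shows "packing n (F4 \<union> (\<lambda>T. insert (e T) T) ` F3) \<and>
    card (F4 \<union> (\<lambda>T. insert (e T) T) ` F3) = card F4 + card F3"
proof -
  let ?ext = "\<lambda>T. insert (e T) T"
  note New = packing_extended_triples[OF F3(1,2) e]
  have meet_F4: "card (X \<inter> w) \<le> 1" if X: "X \<in> ?ext ` F3" and w: "w \<in> F4" for X w
  proof -
    obtain T where "T \<in> F3" "X = ?ext T"
      using X by blast
    then have "X \<inter> w \<subseteq> {e T}"
      using F3(3) w by (auto simp: disjnt_def)
    then show ?thesis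
      by (rule card_le_1_if_subset_singleton)
  qed
  have "?ext ` F3 \<inter> F4 = {}"
  proof (rule ccontr)
    assume "?ext ` F3 \<inter> F4 \<noteq> {}"
    then obtain X where "X \<in> ?ext ` F3" "X \<in> F4"
      by blast
    then show False
      using meet_F4[of X X] packing_block[OF F4] by simp
  qed
  then show ?thesis
    using packing_exchange[of n F4 "{}", unfolded Diff_empty, OF F4 _ New(1) _ meet_F4] New(2)
    by simp
qed

section \<open>From separated families to packings\<close>

lemma packing_of_separated_4_sets:
  assumes "separated 6 F" "G \<subseteq> F" "\<forall>X\<in>G. X \<subseteq> {..<n} \<and> card X = 4"
  shows "packing n G"
  unfolding packing_def pairwise_def
proof (intro conjI ballI impI)
  fix X Y assume XY: "X \<in> G" "Y \<in> G" "X \<noteq> Y"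
  then have "X \<in> F" "Y \<in> F" "card X = 4" "card Y = 4"
    using assms(2,3) by auto
  moreover from this have "finite X" "finite Y"
    by (simp_all add: card_ge_0_finite)
  ultimately have "6 + 2 * card (X \<inter> Y) \<le> 4 + 4"
    using separated_card_Int[OF assms(1) _ _ XY(3)] by metis
  then show "card (X \<inter> Y) \<le> 1"
    by simp
qed (use assms(3) in auto)

lemma packing_of_separated_with_pair:
  assumes n: "4 \<le> n" "n \<noteq> 6"
    and F: "\<forall>X\<in>F. X \<subseteq> {..<n} \<and> card X \<le> 4" "separated 6 F" and P: "P \<in> F" "card P = 2"
  shows "\<exists>G. packing n G \<and> card F \<le> card G"
proof -
  have fin: "finite X" if "X \<in> F" for X
    using F(1) that by (meson finite_lessThan finite_subset)
  define W where "W = F - {P}"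
  have W: "card w = 4" "disjnt P w" if "w \<in> W" for w
  proof -
    have w: "w \<in> F" "w \<noteq> P"
      using that by (auto simp: W_def)
    then have "6 + 2 * card (P \<inter> w) \<le> 2 + card w" "card w \<le> 4"
      using separated_card_Int[OF F(2) P(1) _ _ fin fin] P F(1) fin by auto
    then show "card w = 4"
      by linarith
    then show "disjnt P w"
      using separated_disjnt[OF F(2) P(1) w(1) w(2)[symmetric] fin fin] P(2) P(1) w(1) by simp
  qed
  have "packing n W"
    using F(1) W(1) by (intro packing_of_separated_4_sets[OF F(2)]) (auto simp: W_def)
  moreover obtain p q where pq: "P = {p, q}" "p \<noteq> q"
    using P(2) by (meson card_2_iff)
  moreover have "p < n" "q < n" "\<forall>w\<in>W. p \<notin> w \<and> q \<notin> w"
    using F(1) P(1) W(2) pq(1) by (auto simp: disjnt_def)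
  ultimately obtain G where "packing n G" "card G = Suc (card W)"
    using packing_extend_avoiding_pair n by blast
  moreover have "F \<subseteq> Pow {..<n}"
    using F(1) by auto
  then have "finite F"
    by (rule finite_subset) simp
  then have "card F = Suc (card W)"
    unfolding W_def using P(1) by (rule card.remove)
  ultimately show ?thesis
    by auto
qed

lemma packing_of_separated_without_pair:
  assumes n: "4 \<le> n" "n \<noteq> 6"
    and F: "\<forall>X\<in>F. X \<subseteq> {..<n} \<and> card X \<le> 4" "separated 6 F" and sizes: "\<forall>X\<in>F. 3 \<le> card X"
  shows "\<exists>G. packing n G \<and> card F \<le> card G"
proof -
  have fin: "finite X" if "X \<in> F" for X
    using F(1) that by (meson finite_lessThan finite_subset)
  define F3 where "F3 = {X \<in> F. card X = 3}"
  define F4 where "F4 = {X \<in> F. card X = 4}"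
  have F3: "\<forall>T\<in>F3. T \<subseteq> {..<n} \<and> card T = 3"
    using F(1) by (auto simp: F3_def)
  have disj3: "pairwise disjnt F3"
    unfolding pairwise_def F3_def using separated_disjnt[OF F(2) _ _ _ fin fin] by auto
  have disj34: "\<forall>T\<in>F3. \<forall>w\<in>F4. disjnt T w"
    unfolding F3_def F4_def using separated_disjnt[OF F(2) _ _ _ fin fin] by fastforce
  have F4: "packing n F4"
    using F(1) by (intro packing_of_separated_4_sets[OF F(2)]) (auto simp: F4_def)
  obtain e where "\<forall>T\<in>F3. e T < n \<and> e T \<notin> T"
    "\<forall>T\<in>F3. \<forall>T'\<in>F3. T \<noteq> T' \<longrightarrow> \<not> (e T \<in> T' \<and> e T' \<in> T)"
    using triples_exists_choice_without_swaps[OF F3 disj3 n] by blast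
  note G = packing_extend_triples[OF F4 F3 disj3 disj34 this]
  have "card X = 3 \<or> card X = 4" if "X \<in> F" for X
  proof -
    have "3 \<le> card X" "card X \<le> 4"
      using F(1) sizes that by auto
    then show ?thesis
      by linarith
  qed
  then have "F = F3 \<union> F4" "F3 \<inter> F4 = {}"
    by (auto simp: F3_def F4_def)
  moreover have "F \<subseteq> Pow {..<n}"
    using F(1) by auto
  then have "finite F3" "finite F4"
    unfolding F3_def F4_def using finite_subset by fastforce+
  ultimately have "card F = card F3 + card F4"
    using card_Un_disjoint by metis
  with G show ?thesis
    by auto
qed

lemma packing_of_separated:
  assumes n: "4 \<le> n" "n \<noteq> 6" and F: "\<forall>X\<in>F. X \<subseteq> {..<n} \<and> card X \<le> 4" "separated 6 F"
  shows "\<exists>G. packing n G \<and> card F \<le> card G"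
proof (cases "card F \<le> 1")
  case True
  have "packing n {{0, 1, 2, 3}}"
    using n(1) by (auto simp: packing_def)
  moreover have "card F \<le> card {{0 :: nat, 1, 2, 3}}"
    using True by simp
  ultimately show ?thesis
    by blast
next
  case False
  then have "finite F"
    by (intro card_ge_0_finite) linarith
  have fin: "finite X" "card X \<le> 4" if "X \<in> F" for X
  proof -
    have "X \<subseteq> {..<n}" "card X \<le> 4"
      using F(1) that by auto
    then show "finite X" "card X \<le> 4"
      using finite_subset by auto
  qed
  have "2 \<le> card X" if "X \<in> F" for X
  proof -
    obtain Y where "Y \<in> F" "Y \<noteq> X"
      using False card_le_Suc0_iff_eq[OF \<open>finite F\<close>] that by auto
    then show ?thesis
      using separated_card_Int[OF F(2) that _ _ fin(1)[OF that] fin(1), of Y] fin(2) by fastforce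
  qed
  then consider P where "P \<in> F" "card P = 2" | "\<forall>X\<in>F. 3 \<le> card X"
    by (metis le_antisym not_less_eq_eq numeral_2_eq_2 numeral_3_eq_3)
  then show ?thesis
  proof cases
    case 1
    then show ?thesis
      by (rule packing_of_separated_with_pair[OF n F])
  next
    case 2
    then show ?thesis
      by (rule packing_of_separated_without_pair[OF n F])
  qed
qed

section \<open>Codes\<close>

lemma finite_vecs: "finite (vecs n)"
proof -
  have "vecs n = {xs. set xs \<subseteq> UNIV \<and> length xs = n}"
    by (auto simp: vecs_def)
  then show ?thesis
    using finite_lists_length_eq[of "UNIV :: bool set" n] by simp
qed

lemma finite_code_sizes: "finite {card S | S. S \<subseteq> vecs n \<and> P S}"
proof -
  have "{card S | S. S \<subseteq> vecs n \<and> P S} \<subseteq> card ` Pow (vecs n)"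
    by auto
  then show ?thesis
    using finite_vecs by (meson finite_Pow_iff finite_imageI finite_subset)
qed

lemma card_le_A:
  assumes "S \<subseteq> vecs n" "\<forall>u\<in>S. wt u = e" "min_dist_ok d S"
  shows "card S \<le> A n d e"
  unfolding A_def using assms by (intro Max_ge[OF finite_code_sizes]) blast

lemma A_attained: "\<exists>S. S \<subseteq> vecs n \<and> (\<forall>u\<in>S. wt u = e) \<and> min_dist_ok d S \<and> card S = A n d e"
proof -
  have "card {} \<in> {card S | S. S \<subseteq> vecs n \<and> (\<forall>u\<in>S. wt u = e) \<and> min_dist_ok d S}"
    by (intro CollectI exI[of _ "{}"]) (simp add: min_dist_ok_def)
  then have "{card S | S. S \<subseteq> vecs n \<and> (\<forall>u\<in>S. wt u = e) \<and> min_dist_ok d S} \<noteq> {}"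
    by blast
  then have "A n d e \<in> {card S | S. S \<subseteq> vecs n \<and> (\<forall>u\<in>S. wt u = e) \<and> min_dist_ok d S}"
    unfolding A_def by (rule Max_in[OF finite_code_sizes])
  then obtain S where "A n d e = card S" "S \<subseteq> vecs n" "\<forall>u\<in>S. wt u = e" "min_dist_ok d S"
    by blast
  then show ?thesis
    by metis
qed

lemma card_le_A':
  assumes "S \<subseteq> vecs n" "S \<noteq> {}" "\<forall>u\<in>S. wt u \<le> e" "min_dist_ok d S"
  shows "card S \<le> A' n d e"
  unfolding A'_def using assms by (intro Max_ge[OF finite_code_sizes]) blast

lemma A'_le:
  assumes "\<And>S. S \<subseteq> vecs n \<Longrightarrow> S \<noteq> {} \<Longrightarrow> \<forall>u\<in>S. wt u \<le> e \<Longrightarrow> min_dist_ok d S \<Longrightarrow> card S \<le> k"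
  shows "A' n d e \<le> k"
  unfolding A'_def
proof (rule Max.boundedI[OF finite_code_sizes])
  have "wt (replicate n False) = 0"
    by (simp add: wt_def)
  then have "card {replicate n False} \<in>
      {card S |S. S \<subseteq> vecs n \<and> S \<noteq> {} \<and> (\<forall>u\<in>S. wt u \<le> e) \<and> min_dist_ok d S}"
    by (fastforce simp: vecs_def min_dist_ok_def)
  then show "{card S |S. S \<subseteq> vecs n \<and> S \<noteq> {} \<and> (\<forall>u\<in>S. wt u \<le> e) \<and> min_dist_ok d S} \<noteq> {}"
    by blast
next
  fix k' assume "k' \<in> {card S |S. S \<subseteq> vecs n \<and> S \<noteq> {} \<and> (\<forall>u\<in>S. wt u \<le> e) \<and> min_dist_ok d S}"
  then obtain S where "k' = card S" "S \<subseteq> vecs n" "S \<noteq> {}" "\<forall>u\<in>S. wt u \<le> e" "min_dist_ok d S"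
    by blast
  then show "k' \<le> k"
    using assms by blast
qed

lemma separated_supp_image:
  assumes "S \<subseteq> vecs n" "min_dist_ok d S"
  shows "separated d (supp ` S)" "inj_on supp S"
proof -
  have len: "length u = n" if "u \<in> S" for u
    using assms(1) that by (auto simp: vecs_def)
  show "inj_on supp S"
    by (rule inj_onI) (metis char_vec_supp len)
  show "separated d (supp ` S)"
    unfolding separated_def
  proof (intro ballI impI)
    fix X Y assume "X \<in> supp ` S" "Y \<in> supp ` S" "X \<noteq> Y"
    then obtain u v where uv: "u \<in> S" "v \<in> S" "u \<noteq> v" "X = supp u" "Y = supp v"
      by blast
    then have "d \<le> hdist u v"
      using assms(2) by (simp add: min_dist_ok_def)
    then show "d \<le> card (sym_diff X Y)"
      using hdist_eq_card_sym_diff[of u v] len uv by simp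
  qed
qed

lemma min_dist_ok_char_vec_image:
  assumes "separated d G" "\<forall>X\<in>G. X \<subseteq> {..<n}"
  shows "min_dist_ok d (char_vec n ` G)" "inj_on (char_vec n) G"
proof -
  have supp: "supp (char_vec n X) = X" if "X \<in> G" for X
    using assms(2) that by auto
  show "inj_on (char_vec n) G"
    by (rule inj_onI) (metis supp)
  show "min_dist_ok d (char_vec n ` G)"
    unfolding min_dist_ok_def
  proof (intro ballI impI)
    fix u v assume "u \<in> char_vec n ` G" "v \<in> char_vec n ` G" "u \<noteq> v"
    then obtain X Y where XY: "X \<in> G" "Y \<in> G" "X \<noteq> Y" "u = char_vec n X" "v = char_vec n Y"
      by blast
    then have "d \<le> card (sym_diff X Y)"
      using assms(1) by (simp add: separated_def)
    then show "d \<le> hdist u v"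
      using hdist_eq_card_sym_diff[of u v] supp XY by simp
  qed
qed

lemma A'_le_A:
  assumes "4 \<le> n" "n \<noteq> 6"
  shows "A' n 6 4 \<le> A n 6 4"
proof (rule A'_le)
  fix S assume S: "S \<subseteq> vecs n" "\<forall>u\<in>S. wt u \<le> 4" "min_dist_ok 6 S"
  have "\<forall>X\<in>supp ` S. X \<subseteq> {..<n} \<and> card X \<le> 4"
    using S(1,2) supp_subset wt_eq_card_supp by (fastforce simp: vecs_def)
  then obtain G where G: "packing n G" "card (supp ` S) \<le> card G"
    using packing_of_separated[OF assms] separated_supp_image[OF S(1,3)] by blast
  have blocks: "\<forall>X\<in>G. X \<subseteq> {..<n}" "\<forall>X\<in>G. card X = 4"
    using packing_block[OF G(1)] by auto
  note code = min_dist_ok_char_vec_image[OF packing_separated[OF G(1)] blocks(1)]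
  have "card S = card (supp ` S)"
    using card_image[OF separated_supp_image(2)[OF S(1,3)]] by simp
  also have "\<dots> \<le> card (char_vec n ` G)"
    using G(2) card_image[OF code(2)] by simp
  also have "\<dots> \<le> A n 6 4"
  proof (rule card_le_A[OF _ _ code(1)])
    show "char_vec n ` G \<subseteq> vecs n"
      by (auto simp: vecs_def)
    show "\<forall>u\<in>char_vec n ` G. wt u = 4"
      using blocks by (auto simp: wt_eq_card_supp Int_absorb2)
  qed
  finally show "card S \<le> A n 6 4" .
qed

lemma A_le_A': "A n d e \<le> A' n d e"
proof -
  obtain S where S: "S \<subseteq> vecs n" "\<forall>u\<in>S. wt u = e" "min_dist_ok d S" "card S = A n d e"
    using A_attained[of n e d] by blast
  show ?thesis
  proof (cases "S = {}")
    case True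
    then show ?thesis
      using S(4) by simp
  next
    case False
    have "\<forall>u\<in>S. wt u \<le> e"
      using S(2) by simp
    then show ?thesis
      using card_le_A'[OF S(1) False _ S(3)] S(4) by simp
  qed
qed

lemma A'_eq_1_if_length_lt:
  assumes "n < d"
  shows "A' n d e = 1"
proof (rule antisym)
  show "A' n d e \<le> 1"
  proof (rule A'_le)
    fix S assume S: "S \<subseteq> vecs n" "min_dist_ok d S"
    have "u = v" if "u \<in> S" "v \<in> S" for u v
    proof (rule ccontr)
      assume "u \<noteq> v"
      then have "d \<le> hdist u v"
        using S(2) that by (simp add: min_dist_ok_def)
      moreover have "hdist u v \<le> n"
        using hdist_le_length[of u v] S(1) that by (auto simp: vecs_def)
      ultimately show False
        using assms by simp
    qed
    moreover have "finite S"
      using S(1) finite_vecs by (rule finite_subset)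
    ultimately show "card S \<le> 1"
      by (intro card_le_1I) blast+
  qed
  have "wt (replicate n False) = 0"
    by (simp add: wt_def)
  then show "1 \<le> A' n d e"
    using card_le_A'[of "{replicate n False}" n e d] by (simp add: vecs_def min_dist_ok_def)
qed

text \<open>With D1 = u + v and D2 = v + w we have u + w = D1 + D2, and D1, D2 live in the same n
  coordinates; counting gives the Plotkin-type bound.\<close>
lemma three_words_length:
  assumes "length u = n" "length v = n" "length w = n"
    and "d \<le> hdist u v" "d \<le> hdist v w" "d \<le> hdist u w"
  shows "3 * d \<le> 2 * n"
proof -
  define D1 where "D1 = sym_diff (supp u) (supp v)"
  define D2 where "D2 = sym_diff (supp v) (supp w)"
  have fin: "finite D1" "finite D2"
    by (simp_all add: D1_def D2_def)
  have "D1 \<union> D2 \<subseteq> {..<n}"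
    using supp_subset[of u] supp_subset[of v] supp_subset[of w] assms(1-3) by (auto simp: D1_def D2_def)
  then have "card (D1 \<union> D2) \<le> n"
    using card_mono[of "{..<n}"] by fastforce
  moreover have "card (D1 \<union> D2) + card (D1 \<inter> D2) = card D1 + card D2"
    using card_Un_Int[OF fin] by simp
  moreover have "sym_diff (supp u) (supp w) = sym_diff D1 D2"
    by (auto simp: D1_def D2_def)
  then have "card (sym_diff D1 D2) + 2 * card (D1 \<inter> D2) = card D1 + card D2"
    "d \<le> card (sym_diff D1 D2)"
    using card_sym_diff[OF fin] assms hdist_eq_card_sym_diff[of u w] by simp_all
  moreover have "d \<le> card D1" "d \<le> card D2"
    using assms hdist_eq_card_sym_diff by (simp_all add: D1_def D2_def)
  ultimately show ?thesis
    by linarith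
qed

lemma A'_le_2_if_length_lt:
  assumes "2 * n < 3 * d"
  shows "A' n d e \<le> 2"
proof (rule A'_le)
  fix S assume S: "S \<subseteq> vecs n" "min_dist_ok d S"
  show "card S \<le> 2"
  proof (rule ccontr)
    assume "\<not> card S \<le> 2"
    then obtain T where "T \<subseteq> S" "card T = 3"
      by (metis obtain_subset_with_card_n not_less_eq_eq numeral_2_eq_2 numeral_3_eq_3)
    then obtain u v w where "u \<in> S" "v \<in> S" "w \<in> S" "u \<noteq> v" "v \<noteq> w" "u \<noteq> w"
      by (auto simp: card_3_iff)
    then have "3 * d \<le> 2 * n"
      using S three_words_length[of u n v w d] by (auto simp: vecs_def min_dist_ok_def)
    with assms show False
      by simp
  qed
qed

lemma A'_6_6_4: "A' 6 6 4 = 2"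
proof (rule antisym)
  show "A' 6 6 4 \<le> 2"
    by (rule A'_le_2_if_length_lt) simp
  define u where "u = char_vec 6 {0, 1, 2}"
  define v where "v = char_vec 6 {3, 4, 5}"
  have supp: "supp u = {0, 1, 2}" "supp v = {3, 4, 5}"
    by (auto simp: u_def v_def)
  then have "u \<noteq> v"
    by auto
  have "sym_diff {0, 1, 2} {3, 4, 5} = {0, 1, 2, 3, 4, 5 :: nat}"
    by auto
  then have "hdist u v = 6" "hdist v u = 6"
    using supp by (simp_all add: hdist_eq_card_sym_diff u_def v_def Un_commute)
  then have "card {u, v} \<le> A' 6 6 4"
    using supp by (intro card_le_A') (auto simp: u_def v_def vecs_def min_dist_ok_def wt_eq_card_supp)
  with \<open>u \<noteq> v\<close> show "2 \<le> A' 6 6 4"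
    by simp
qed

theorem corollary3:
  shows "(\<forall>n::nat. n \<ge> 1 \<and> n \<notin> {1, 2, 3, 6} \<longrightarrow> A' n 6 4 = A n 6 4)
       \<and> (\<forall>n::nat. n \<in> {1, 2, 3} \<longrightarrow> A' n 6 4 = 1)
       \<and> A' 6 6 4 = 2"
proof (intro conjI allI impI)
  fix n :: nat
  assume "n \<ge> 1 \<and> n \<notin> {1, 2, 3, 6}"
  then have "4 \<le> n" "n \<noteq> 6"
    by auto
  then show "A' n 6 4 = A n 6 4"
    using A'_le_A A_le_A' by (simp add: antisym)
next
  fix n :: nat
  assume "n \<in> {1, 2, 3}"
  then show "A' n 6 4 = 1"
    by (intro A'_eq_1_if_length_lt) auto
qed (rule A'_6_6_4)

end
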